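(* For any integer $k$ and any $\epsilon>0$, there exist a prior $p$, a utility function $f$ and a policy $\pi$ that is greedy with respect to $f$ (and $p$) and selects $k$ elements, such that $\beta_\pi(f,p)=\epsilon$.
   Context: Finite ground set $V$, finite state set $Y$; a realization $\phi:V\to Y$ is drawn from prior $p$; $f:2^V\times\Phi_V\to\mathbb{R}$ is a utility function. A partial realization $\psi$ maps $\mathrm{dom}(\psi)\subseteq V$ to $Y$; $\phi\sim\psi$ means agreement on $\mathrm{dom}(\psi)$. A (possibly randomized) policy $\pi$ maps the observed partial realization to the next element to select or $\bot$ (terminate); $\psi_t$ denotes observations after $t$ selections; $E(\pi,\phi)$ is the set of selected elements; $c_{\mathrm{avg}}(\pi,p)=\mathbb{E}[|E(\pi,\phi)|]$. $\Delta^f_p(v\mid\psi)=\mathbb{E}[f(\{v\}\cup\mathrm{dom}(\psi),\phi)-f(\mathrm{dom}(\psi),\phi)\mid\phi\sim\psi]$. $\pi$ is greedy if for every $\psi$ with $\pi(\psi)\ne\bot$, $\Delta^f_p(\pi(\psi)\mid\psi)=\max_{v\in V}\Delta^f_p(v\mid\psi)$. A sub-policy of $\pi$ runs like $\pi$ but may terminate earlier. For $\tau\ge0,\rho\in[0,1]$, $\pi^{\tau,\rho}$ is the sub-policy of $\pi$ that with probability $\rho$ terminates as soon as every remaining element has expected marginal gain strictly smaller than $\tau$, and otherwise terminates as soon as every remaining element has expected marginal gain at most $\tau$. For each integer $i\le c_{\mathrm{avg}}(\pi,p)$, the sub-policy of this form with $c_{\mathrm{avg}}=i$ exists and is unique;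 denote it $\pi_i$. $\Delta^u_{\pi,i}$ is the smallest $u$ such that a.s., at termination time $t$ of $\pi_i$, $\Delta^f_p(v\mid\psi_t)\le u$ for all $v$; $\Delta^l_{\pi,i}$ is the largest $u$ such that a.s. for all $t$ until $\pi_i$ terminates, $\Delta^f_p(\pi_i(\psi_t)\mid\psi_t)\ge u$. The maximal gain ratio is $\beta_\pi(f,p)=\max_{i\in\mathbb{N},\,i\le c_{\mathrm{avg}}(\pi,p)}\Delta^u_{\pi,i}/\Delta^l_{\pi,i}$. *)

theory Defs
  imports "HOL-Probability.Probability"
begin

(* Realizations and partial
 realizations are partial maps nat <rightharpoonup> nat; a realization has domain exactly V.
 phi ~ psi (agreement on dom psi) is  psi <subseteq><^sub>m phi. *)

type_synonym prl = "nat \<rightharpoonup> nat"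

definition realizations :: "nat set \<Rightarrow> nat set \<Rightarrow> prl set" where
  "realizations V Y = {\<phi>. dom \<phi> = V \<and> ran \<phi> \<subseteq> Y}"

definition partial_realization :: "nat set \<Rightarrow> nat set \<Rightarrow> prl \<Rightarrow> bool" where
  "partial_realization V Y \<psi> \<longleftrightarrow> dom \<psi> \<subseteq> V \<and> ran \<psi> \<subseteq> Y"

definition is_prior :: "nat set \<Rightarrow> nat set \<Rightarrow> prl pmf \<Rightarrow> bool" where
  "is_prior V Y p \<longleftrightarrow> set_pmf p \<subseteq> realizations V Y"

definition cprob :: "prl pmf \<Rightarrow> prl \<Rightarrow> real" where
  "cprob p \<psi> = measure_pmf.prob p {\<phi>. \<psi> \<subseteq>\<^sub>m \<phi>}"

(* Expected marginal gain conditioned on phi ~ psi (set to 0 for psi of probability 0). *)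
definition gain :: "(nat set \<Rightarrow> prl \<Rightarrow> real) \<Rightarrow> prl pmf \<Rightarrow> nat \<Rightarrow> prl \<Rightarrow> real" where
  "gain f p v \<psi> =
     (if cprob p \<psi> = 0 then 0
      else measure_pmf.expectation p
             (\<lambda>\<phi>. if \<psi> \<subseteq>\<^sub>m \<phi> then f (insert v (dom \<psi>)) \<phi> - f (dom \<psi>) \<phi> else 0)
           / cprob p \<psi>)"

(* Execution of a deterministic rule (None = terminate) on realization phi. *)
definition step :: "(prl \<Rightarrow> nat option) \<Rightarrow> prl \<Rightarrow> prl \<Rightarrow> prl" where
  "step \<pi> \<phi> \<psi> = (case \<pi> \<psi> of None \<Rightarrow> \<psi> | Some v \<Rightarrow> \<psi>(v := \<phi> v))"

definition state :: "(prl \<Rightarrow> nat option) \<Rightarrow> prl \<Rightarrow> nat \<Rightarrow> prl" where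
  "state \<pi> \<phi> t = (step \<pi> \<phi> ^^ t) Map.empty"

definition stop_time :: "(prl \<Rightarrow> nat option) \<Rightarrow> prl \<Rightarrow> nat" where
  "stop_time \<pi> \<phi> = (LEAST t. \<pi> (state \<pi> \<phi> t) = None)"

definition final_state :: "(prl \<Rightarrow> nat option) \<Rightarrow> prl \<Rightarrow> prl" where
  "final_state \<pi> \<phi> = state \<pi> \<phi> (stop_time \<pi> \<phi>)"

definition selected :: "(prl \<Rightarrow> nat option) \<Rightarrow> prl \<Rightarrow> nat set" where
  "selected \<pi> \<phi> = dom (final_state \<pi> \<phi>)"

(* A (possibly randomized) policy: a seed distribution q and a rule
 <pi> r <psi> for each seed r. Valid: it only selects new elements of V. *)
definition valid_policy :: "nat set \<Rightarrow> ('s \<Rightarrow> prl \<Rightarrow> nat option) \<Rightarrow> bool" where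
  "valid_policy V \<pi> \<longleftrightarrow> (\<forall>r \<psi> v. \<pi> r \<psi> = Some v \<longrightarrow> v \<in> V \<and> v \<notin> dom \<psi>)"

definition c_avg :: "prl pmf \<Rightarrow> 's pmf \<Rightarrow> ('s \<Rightarrow> prl \<Rightarrow> nat option) \<Rightarrow> real" where
  "c_avg p q \<pi> = measure_pmf.expectation (pair_pmf q p)
                    (\<lambda>(r, \<phi>). real (card (selected (\<pi> r) \<phi>)))"

definition greedy :: "nat set \<Rightarrow> nat set \<Rightarrow> (nat set \<Rightarrow> prl \<Rightarrow> real) \<Rightarrow> prl pmf
                       \<Rightarrow> ('s \<Rightarrow> prl \<Rightarrow> nat option) \<Rightarrow> bool" where
  "greedy V Y f p \<pi> \<longleftrightarrow>
     (\<forall>r \<psi> v. partial_realization V Y \<psi> \<and> \<pi> r \<psi> = Some v \<longrightarrow>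
        gain f p v \<psi> = Max ((\<lambda>w. gain f p w \<psi>) ` V))"

(* The sub-policy pi^{tau,rho}: an extra coin b ~ Bernoulli(rho) is drawn at the start;
 if b, stop as soon as all remaining elements have gain < tau, otherwise as soon as
 all have gain <= tau (and, in any case, stop when pi stops). *)
definition sub_seed :: "'s pmf \<Rightarrow> real \<Rightarrow> ('s \<times> bool) pmf" where
  "sub_seed q \<rho> = pair_pmf q (bernoulli_pmf \<rho>)"

definition sub_rule :: "nat set \<Rightarrow> (nat set \<Rightarrow> prl \<Rightarrow> real) \<Rightarrow> prl pmf
      \<Rightarrow> ('s \<Rightarrow> prl \<Rightarrow> nat option) \<Rightarrow> real \<Rightarrow> ('s \<times> bool) \<Rightarrow> prl \<Rightarrow> nat option" where
  "sub_rule V f p \<pi> \<tau> rb \<psi> =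
     (if (if snd rb then (\<forall>v \<in> V - dom \<psi>. gain f p v \<psi> < \<tau>)
                    else (\<forall>v \<in> V - dom \<psi>. gain f p v \<psi> \<le> \<tau>))
      then None else \<pi> (fst rb) \<psi>)"

definition ith_params :: "nat set \<Rightarrow> (nat set \<Rightarrow> prl \<Rightarrow> real) \<Rightarrow> prl pmf \<Rightarrow> 's pmf
      \<Rightarrow> ('s \<Rightarrow> prl \<Rightarrow> nat option) \<Rightarrow> nat \<Rightarrow> real \<times> real" where
  "ith_params V f p q \<pi> i =
     (SOME (\<tau>, \<rho>). 0 \<le> \<tau> \<and> 0 \<le> \<rho> \<and> \<rho> \<le> 1 \<and>
        c_avg p (sub_seed q \<rho>) (sub_rule V f p \<pi> \<tau>) = real i)"

definition Delta_u :: "nat set \<Rightarrow> (nat set \<Rightarrow> prl \<Rightarrow> real) \<Rightarrow> prl pmf \<Rightarrow> 'r pmf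
      \<Rightarrow> ('r \<Rightarrow> prl \<Rightarrow> nat option) \<Rightarrow> real" where
  "Delta_u V f p q \<sigma> = Inf {u. AE x in measure_pmf (pair_pmf q p).
       \<forall>v \<in> V. gain f p v (final_state (\<sigma> (fst x)) (snd x)) \<le> u}"

definition Delta_l :: "(nat set \<Rightarrow> prl \<Rightarrow> real) \<Rightarrow> prl pmf \<Rightarrow> 'r pmf
      \<Rightarrow> ('r \<Rightarrow> prl \<Rightarrow> nat option) \<Rightarrow> real" where
  "Delta_l f p q \<sigma> = Sup {u. AE x in measure_pmf (pair_pmf q p).
       \<forall>t < stop_time (\<sigma> (fst x)) (snd x).
          u \<le> gain f p (the (\<sigma> (fst x) (state (\<sigma> (fst x)) (snd x) t)))
                       (state (\<sigma> (fst x)) (snd x) t)}"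

definition Delta_u_i :: "nat set \<Rightarrow> (nat set \<Rightarrow> prl \<Rightarrow> real) \<Rightarrow> prl pmf \<Rightarrow> 's pmf
      \<Rightarrow> ('s \<Rightarrow> prl \<Rightarrow> nat option) \<Rightarrow> nat \<Rightarrow> real" where
  "Delta_u_i V f p q \<pi> i = (case ith_params V f p q \<pi> i of (\<tau>, \<rho>) \<Rightarrow>
      Delta_u V f p (sub_seed q \<rho>) (sub_rule V f p \<pi> \<tau>))"

definition Delta_l_i :: "nat set \<Rightarrow> (nat set \<Rightarrow> prl \<Rightarrow> real) \<Rightarrow> prl pmf \<Rightarrow> 's pmf
      \<Rightarrow> ('s \<Rightarrow> prl \<Rightarrow> nat option) \<Rightarrow> nat \<Rightarrow> real" where
  "Delta_l_i V f p q \<pi> i = (case ith_params V f p q \<pi> i of (\<tau>, \<rho>) \<Rightarrow>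
      Delta_l f p (sub_seed q \<rho>) (sub_rule V f p \<pi> \<tau>))"

definition max_gain_ratio :: "nat set \<Rightarrow> (nat set \<Rightarrow> prl \<Rightarrow> real) \<Rightarrow> prl pmf \<Rightarrow> 's pmf
      \<Rightarrow> ('s \<Rightarrow> prl \<Rightarrow> nat option) \<Rightarrow> real" where
  "max_gain_ratio V f p q \<pi> =
     Max {Delta_u_i V f p q \<pi> i / Delta_l_i V f p q \<pi> i | i. 1 \<le> i \<and> real i \<le> c_avg p q \<pi>}"

end

theory Submission
  imports Defs
begin

text \<open>Take the ground set \<open>{0..k}\<close>, a single all-zero realization and, with
  \<open>\<alpha> = min \<epsilon> (1/2)\<close>, the utility in which each \<open>v < k\<close> contributes \<open>\<alpha> ^ v\<close> while \<open>k\<close>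
  contributes the bonus \<open>\<epsilon> * \<alpha> ^ (k - 1)\<close> only once \<open>0, \<dots>, k - 1\<close> have all been selected.
  From the prefix \<open>{0..<t}\<close>, \<open>t < k\<close>, the largest gain is \<open>\<alpha> ^ t\<close>, attained by \<open>t\<close>, so the
  policy selecting \<open>0, 1, \<dots>, k - 1\<close> in this order is greedy. Its sub-policy \<open>\<pi>\<^sub>i\<close> is the
  threshold policy at \<open>\<alpha> ^ i\<close>: it stops after \<open>i\<close> elements, the smallest gain it took is
  \<open>\<alpha> ^ (i - 1)\<close>, and the best remaining gain is \<open>\<alpha> ^ i\<close> for \<open>i < k\<close> but the bonus for \<open>i = k\<close>.
  Hence the ratios are \<open>\<alpha> \<le> \<epsilon>\<close> for \<open>i < k\<close> and exactly \<open>\<epsilon>\<close> for \<open>i = k\<close>.\<close>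

lemma state_restrict_lessThan:
  assumes "\<And>t. t < T \<Longrightarrow> \<sigma> (\<phi> |` {..<t}) = Some t" and "t \<le> T"
  shows "state \<sigma> \<phi> t = \<phi> |` {..<t}"
  using assms(2)
proof (induction t)
  case 0
  then show ?case by (simp add: state_def)
next
  case (Suc t)
  have "state \<sigma> \<phi> (Suc t) = step \<sigma> \<phi> (\<phi> |` {..<t})"
    using Suc by (simp add: state_def)
  also have "\<dots> = \<phi> |` {..<Suc t}"
    using assms(1)[of t] Suc.prems by (simp add: step_def lessThan_Suc restrict_map_insert)
  finally show ?case .
qed

lemma final_state_restrict_lessThan:
  assumes "\<And>t. t < T \<Longrightarrow> \<sigma> (\<phi> |` {..<t}) = Some t" and "\<sigma> (\<phi> |` {..<T}) = None"
  shows "stop_time \<sigma> \<phi> = T" and "final_state \<sigma> \<phi> = \<phi> |` {..<T}"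
proof -
  note state = state_restrict_lessThan[OF assms(1)]
  show "stop_time \<sigma> \<phi> = T"
    unfolding stop_time_def
  proof (rule Least_equality)
    show "\<sigma> (state \<sigma> \<phi> T) = None" using state[of T] assms(2) by simp
  next
    fix t assume "\<sigma> (state \<sigma> \<phi> t) = None"
    then show "T \<le> t" using state assms(1) by (metis not_le option.distinct(1) order_less_imp_le)
  qed
  then show "final_state \<sigma> \<phi> = \<phi> |` {..<T}"
    using state by (simp add: final_state_def)
qed

lemma gain_return_pmf:
  "gain f (return_pmf \<phi>) v \<psi> =
     (if \<psi> \<subseteq>\<^sub>m \<phi> then f (insert v (dom \<psi>)) \<phi> - f (dom \<psi>) \<phi> else 0)"
  by (simp add: gain_def cprob_def)

lemma pair_sub_seed_return_pmf:
  "pair_pmf (sub_seed (return_pmf r) \<rho>) (return_pmf \<phi>) = map_pmf (\<lambda>b. ((r, b), \<phi>)) (bernoulli_pmf \<rho>)"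
  by (simp add: sub_seed_def pair_return_pmf1 pair_return_pmf2 map_pmf_comp)

lemma c_avg_return_pmf:
  "c_avg (return_pmf \<phi>) (return_pmf r) \<pi> = card (selected (\<pi> r) \<phi>)"
  by (simp add: c_avg_def)

lemma bernoulli_mixture_eq_nat:
  fixes m n i :: nat and \<rho> :: real
  assumes "0 \<le> \<rho>" and "\<rho> \<le> 1" and "m \<le> n" and "n \<le> Suc m"
    and mix: "\<rho> * n + (1 - \<rho>) * m = i" and b: "b \<in> set_pmf (bernoulli_pmf \<rho>)"
  shows "(if b then n else m) = i"
proof (cases "n = m")
  case True
  then show ?thesis using mix by (simp add: algebra_simps)
next
  case False
  then have n: "n = Suc m" using assms(3,4) by simp
  then have "m + \<rho> = i" using mix by (simp add: algebra_simps)
  then have "i = m \<or> i = Suc m"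
    using assms(1,2) by linarith
  then have "\<rho> = 0 \<and> i = m \<or> \<rho> = 1 \<and> i = Suc m"
    using \<open>m + \<rho> = i\<close> by auto
  moreover have "pmf (bernoulli_pmf \<rho>) b \<noteq> 0" using b by (simp add: set_pmf_iff)
  ultimately show ?thesis using n by (cases b) auto
qed

locale gain_ratio_example =
  fixes k :: nat and \<epsilon> :: real
  assumes k_pos: "1 \<le> k" and eps_pos: "0 < \<epsilon>"
begin

definition \<alpha> :: real where "\<alpha> = min \<epsilon> (1/2)"

definition bonus :: real where "bonus = \<epsilon> * \<alpha> ^ (k - 1)"

definition ground :: "nat set" where "ground = {..k}"

definition zero_realization :: prl where "zero_realization = (\<lambda>_. Some 0) |` ground"

definition prefix :: "nat \<Rightarrow> prl" where "prefix t = zero_realization |` {..<t}"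

definition utility :: "nat set \<Rightarrow> prl \<Rightarrow> real" where
  "utility S \<phi> = (\<Sum>v \<in> S \<inter> {..<k}. \<alpha> ^ v) + (if ground \<subseteq> S then bonus else 0)"

definition prior :: "prl pmf" where "prior = return_pmf zero_realization"

definition seed :: "nat pmf" where "seed = return_pmf 0"

definition greedy_rule :: "nat \<Rightarrow> prl \<Rightarrow> nat option" where
  "greedy_rule r \<psi> = (if \<psi> \<in> prefix ` {..<k} then Some (card (dom \<psi>)) else None)"

definition top_gain :: "nat \<Rightarrow> real" where "top_gain t = (if t < k then \<alpha> ^ t else bonus)"

lemma alpha_pos: "0 < \<alpha>" and alpha_less_1: "\<alpha> < 1" and alpha_le_eps: "\<alpha> \<le> \<epsilon>"
  using eps_pos by (auto simp: \<alpha>_def)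

lemma alpha_power_antimono: "s \<le> t \<Longrightarrow> \<alpha> ^ t \<le> \<alpha> ^ s"
  using alpha_pos alpha_less_1 by (simp add: power_decreasing)

lemma bonus_pos: "0 < bonus"
  using eps_pos alpha_pos by (simp add: bonus_def)

lemma dom_prefix: "t \<le> Suc k \<Longrightarrow> dom (prefix t) = {..<t}"
  by (auto simp: prefix_def zero_realization_def ground_def)

lemma is_prior_prior: "is_prior ground {0} prior"
  by (auto simp: is_prior_def prior_def realizations_def zero_realization_def ran_def
                 restrict_map_def split: if_splits)

lemma prefix_le_zero_realization: "prefix t \<subseteq>\<^sub>m zero_realization"
  by (auto simp: prefix_def map_le_def)

lemma gain_prefix:
  assumes "t \<le> k" and "v \<le> k"
  shows "gain utility prior v (prefix t) =
           (if v < t then 0 else if v < k then \<alpha> ^ v else if t = k then bonus else 0)"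
proof -
  have gain: "gain utility prior v (prefix t) = utility (insert v {..<t}) zero_realization
                 - utility {..<t} zero_realization"
    using assms by (simp add: gain_return_pmf prior_def prefix_le_zero_realization dom_prefix)
  consider "v < t" | "t \<le> v" "v < k" | "v = k" using assms by linarith
  then show ?thesis
  proof cases
    case 1
    then show ?thesis by (simp add: gain insert_absorb)
  next
    case 2
    have "k \<notin> insert v {..<t}" using 2 by simp
    then have "\<not> ground \<subseteq> insert v {..<t}" and "\<not> ground \<subseteq> {..<t}"
      by (auto simp: ground_def)
    moreover have "insert v {..<t} \<inter> {..<k} = insert v ({..<t} \<inter> {..<k})" using 2 by auto
    ultimately show ?thesis unfolding gain using 2 by (simp add: utility_def)
  next
    case 3
    have sum_eq: "insert k {..<t} \<inter> {..<k} = {..<t} \<inter> {..<k}" by auto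
    have "\<not> ground \<subseteq> {..<t}" using assms(1) by (auto simp: ground_def)
    moreover have "ground \<subseteq> insert k {..<t} \<longleftrightarrow> t = k"
    proof
      assume "ground \<subseteq> insert k {..<t}"
      then have "t \<notin> ground \<or> t = k" by auto
      then show "t = k" using assms(1) by (simp add: ground_def)
    qed (auto simp: ground_def)
    ultimately show ?thesis unfolding gain unfolding 3 by (simp add: utility_def sum_eq)
  qed
qed

lemma gain_prefix_le_top_gain:
  "t \<le> k \<Longrightarrow> v \<in> ground \<Longrightarrow> gain utility prior v (prefix t) \<le> top_gain t"
  using alpha_pos bonus_pos alpha_power_antimono[of t v]
  by (simp add: gain_prefix ground_def top_gain_def)

lemma gain_prefix_top_gain:
  "t \<le> k \<Longrightarrow> gain utility prior (if t < k then t else k) (prefix t) = top_gain t"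
  by (simp add: gain_prefix top_gain_def)

lemma Max_gain_prefix:
  assumes "t \<le> k"
  shows "Max ((\<lambda>v. gain utility prior v (prefix t)) ` ground) = top_gain t"
proof (rule Max_eqI)
  show "finite ((\<lambda>v. gain utility prior v (prefix t)) ` ground)" by (simp add: ground_def)
  show "y \<le> top_gain t" if "y \<in> (\<lambda>v. gain utility prior v (prefix t)) ` ground" for y
    using that gain_prefix_le_top_gain[OF assms] by auto
  show "top_gain t \<in> (\<lambda>v. gain utility prior v (prefix t)) ` ground"
    using gain_prefix_top_gain[OF assms] assms
    by (intro image_eqI[of _ _ "if t < k then t else k"]) (auto simp: ground_def)
qed

lemma prefix_eq_iff: "s \<le> Suc k \<Longrightarrow> t \<le> Suc k \<Longrightarrow> prefix s = prefix t \<longleftrightarrow> s = t"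
  by (metis dom_prefix lessThan_eq_iff)

lemma greedy_rule_prefix:
  assumes "t \<le> k"
  shows "greedy_rule r (prefix t) = (if t < k then Some t else None)"
proof -
  have "prefix t \<in> prefix ` {..<k} \<longleftrightarrow> t < k"
    using assms prefix_eq_iff by fastforce
  then show ?thesis using assms by (simp add: greedy_rule_def dom_prefix)
qed

lemma final_state_greedy_rule: "final_state (greedy_rule r) zero_realization = prefix k"
  using final_state_restrict_lessThan[where \<phi> = zero_realization, folded prefix_def]
  by (simp add: greedy_rule_prefix)

lemma card_selected_greedy_rule: "card (selected (greedy_rule r) zero_realization) = k"
  by (simp add: selected_def final_state_greedy_rule dom_prefix)

lemma AE_card_selected_greedy_rule:
  "AE x in measure_pmf (pair_pmf seed prior). card (selected (greedy_rule (fst x)) (snd x)) = k"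
  by (simp add: seed_def prior_def AE_measure_pmf_iff card_selected_greedy_rule)

lemma greedy_rule_SomeD: "greedy_rule r \<psi> = Some v \<Longrightarrow> v < k \<and> \<psi> = prefix v"
  by (auto simp: greedy_rule_def dom_prefix split: if_splits)

lemma valid_policy_greedy_rule: "valid_policy ground greedy_rule"
  unfolding valid_policy_def
proof (intro allI impI)
  fix r \<psi> v
  assume "greedy_rule r \<psi> = Some v"
  then have "v < k" and "\<psi> = prefix v" using greedy_rule_SomeD by blast+
  then show "v \<in> ground \<and> v \<notin> dom \<psi>" by (simp add: dom_prefix ground_def)
qed

lemma greedy_rule_is_greedy: "greedy ground {0} utility prior greedy_rule"
  unfolding greedy_def
proof (intro allI impI)
  fix r \<psi> v
  assume "partial_realization ground {0} \<psi> \<and> greedy_rule r \<psi> = Some v"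
  then have "v < k" and "\<psi> = prefix v" using greedy_rule_SomeD by blast+
  then show "gain utility prior v \<psi> = Max ((\<lambda>w. gain utility prior w \<psi>) ` ground)"
    by (simp add: Max_gain_prefix gain_prefix top_gain_def)
qed

abbreviation threshold_rule :: "real \<Rightarrow> nat \<times> bool \<Rightarrow> prl \<Rightarrow> nat option" where
  "threshold_rule \<tau> \<equiv> sub_rule ground utility prior greedy_rule \<tau>"

definition below :: "bool \<Rightarrow> real \<Rightarrow> real \<Rightarrow> bool" where
  "below strict \<tau> x \<longleftrightarrow> (if strict then x < \<tau> else x \<le> \<tau>)"

definition threshold_stop :: "bool \<Rightarrow> real \<Rightarrow> nat" where
  "threshold_stop strict \<tau> = (LEAST t. t = k \<or> below strict \<tau> (\<alpha> ^ t))"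

lemma threshold_rule_prefix:
  assumes "t \<le> k"
  shows "threshold_rule \<tau> (r, b) (prefix t) = (if t < k \<and> \<not> below b \<tau> (\<alpha> ^ t) then Some t else None)"
proof (cases "t < k")
  case False
  then show ?thesis using assms by (simp add: sub_rule_def greedy_rule_prefix)
next
  case True
  have remaining: "ground - dom (prefix t) = {t..k}"
    using assms by (auto simp: dom_prefix ground_def)
  have "gain utility prior v (prefix t) \<le> \<alpha> ^ t" if "v \<in> {t..k}" for v
    using gain_prefix_le_top_gain[OF assms, of v] that True by (simp add: ground_def top_gain_def)
  moreover have "gain utility prior t (prefix t) = \<alpha> ^ t"
    using True by (simp add: gain_prefix)
  moreover have "t \<in> {t..k}" using assms by simp
  ultimately have "(\<forall>v \<in> ground - dom (prefix t). gain utility prior v (prefix t) < \<tau>) \<longleftrightarrow> \<alpha> ^ t < \<tau>"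
    and "(\<forall>v \<in> ground - dom (prefix t). gain utility prior v (prefix t) \<le> \<tau>) \<longleftrightarrow> \<alpha> ^ t \<le> \<tau>"
    unfolding remaining by (metis order.strict_trans1, metis order.trans)
  then show ?thesis
    using True by (simp add: sub_rule_def greedy_rule_prefix below_def)
qed

lemma threshold_stop_le: "threshold_stop b \<tau> \<le> k"
  unfolding threshold_stop_def by (rule Least_le) simp

lemma less_threshold_stop: "t < threshold_stop b \<tau> \<Longrightarrow> t < k \<and> \<not> below b \<tau> (\<alpha> ^ t)"
  using threshold_stop_le[of b \<tau>] not_less_Least[of t] unfolding threshold_stop_def by fastforce

lemma threshold_stop_cases: "threshold_stop b \<tau> = k \<or> below b \<tau> (\<alpha> ^ threshold_stop b \<tau>)"
  unfolding threshold_stop_def by (rule LeastI[of _ k]) simp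

lemma threshold_rule_prefix_less:
  "t < threshold_stop b \<tau> \<Longrightarrow> threshold_rule \<tau> (r, b) (prefix t) = Some t"
  using less_threshold_stop threshold_stop_le by (simp add: threshold_rule_prefix less_imp_le)

lemma threshold_rule_prefix_stop:
  "threshold_rule \<tau> (r, b) (prefix (threshold_stop b \<tau>)) = None"
  using threshold_stop_cases[of b \<tau>] threshold_stop_le[of b \<tau>] by (auto simp: threshold_rule_prefix)

lemma state_threshold_rule:
  "t \<le> threshold_stop b \<tau> \<Longrightarrow> state (threshold_rule \<tau> (r, b)) zero_realization t = prefix t"
  by (rule state_restrict_lessThan[where \<sigma> = "threshold_rule \<tau> (r, b)" and \<phi> = zero_realization,
        folded prefix_def, OF threshold_rule_prefix_less])

lemma final_state_threshold_rule:
  "stop_time (threshold_rule \<tau> (r, b)) zero_realization = threshold_stop b \<tau>"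
  "final_state (threshold_rule \<tau> (r, b)) zero_realization = prefix (threshold_stop b \<tau>)"
  using final_state_restrict_lessThan[where \<sigma> = "threshold_rule \<tau> (r, b)" and \<phi> = zero_realization,
      folded prefix_def, OF threshold_rule_prefix_less threshold_rule_prefix_stop]
  by simp_all

lemma threshold_stop_strict_bounds:
  "threshold_stop False \<tau> \<le> threshold_stop True \<tau>"
  "threshold_stop True \<tau> \<le> Suc (threshold_stop False \<tau>)"
proof -
  show "threshold_stop False \<tau> \<le> threshold_stop True \<tau>"
    unfolding threshold_stop_def[of False]
    by (rule Least_le) (use threshold_stop_cases[of True \<tau>] in \<open>auto simp: below_def\<close>)
  let ?s = "threshold_stop False \<tau>"
  show "threshold_stop True \<tau> \<le> Suc ?s"
  proof (cases "Suc ?s \<ge> k")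
    case True
    then show ?thesis using threshold_stop_le[of True \<tau>] by linarith
  next
    case False
    then have "\<alpha> ^ ?s \<le> \<tau>" using threshold_stop_cases[of False \<tau>] by (auto simp: below_def)
    moreover have "\<alpha> ^ Suc ?s < \<alpha> ^ ?s"
      using alpha_pos alpha_less_1 by simp
    ultimately have "below True \<tau> (\<alpha> ^ Suc ?s)" by (simp add: below_def)
    then show ?thesis unfolding threshold_stop_def[of True] by (intro Least_le) simp
  qed
qed

lemma threshold_stop_alpha_power: "i \<le> k \<Longrightarrow> threshold_stop False (\<alpha> ^ i) = i"
  unfolding threshold_stop_def
proof (rule Least_equality)
  show "i = k \<or> below False (\<alpha> ^ i) (\<alpha> ^ i)" by (simp add: below_def)
  fix t assume "i \<le> k" and "t = k \<or> below False (\<alpha> ^ i) (\<alpha> ^ t)"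
  then show "i \<le> t"
    using alpha_pos alpha_less_1 by (auto simp: below_def power_decreasing_iff)
qed

lemma card_selected_threshold_rule:
  "card (selected (threshold_rule \<tau> (r, b)) zero_realization) = threshold_stop b \<tau>"
  using threshold_stop_le[of b \<tau>] by (simp add: selected_def final_state_threshold_rule dom_prefix)

lemma pair_threshold_seed_prior:
  "pair_pmf (sub_seed seed \<rho>) prior = map_pmf (\<lambda>b. ((0, b), zero_realization)) (bernoulli_pmf \<rho>)"
  unfolding seed_def prior_def by (rule pair_sub_seed_return_pmf)

lemma AE_threshold_seed:
  "(AE x in measure_pmf (pair_pmf (sub_seed seed \<rho>) prior). P x) \<longleftrightarrow>
     (\<forall>b \<in> set_pmf (bernoulli_pmf \<rho>). P ((0, b), zero_realization))"
  by (simp add: pair_threshold_seed_prior AE_measure_pmf_iff)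

lemma c_avg_threshold_rule:
  assumes "0 \<le> \<rho>" and "\<rho> \<le> 1"
  shows "c_avg prior (sub_seed seed \<rho>) (threshold_rule \<tau>) =
           \<rho> * threshold_stop True \<tau> + (1 - \<rho>) * threshold_stop False \<tau>"
  using assms by (simp add: c_avg_def pair_threshold_seed_prior card_selected_threshold_rule)

text \<open>\<open>ith_params\<close> picks \<open>(\<tau>, \<rho>)\<close> by Hilbert choice, so every admissible pair has to be
  handled. As the gains \<open>\<alpha> ^ t\<close> strictly decrease, the strict and the non-strict test stop at
  most one step apart, and an average of \<open>i\<close> forces every possible outcome of the coin to stop
  after exactly \<open>i\<close> elements.\<close>

lemma threshold_stop_of_c_avg:
  assumes "0 \<le> \<rho>" and "\<rho> \<le> 1" and "c_avg prior (sub_seed seed \<rho>) (threshold_rule \<tau>) = i"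
    and "b \<in> set_pmf (bernoulli_pmf \<rho>)"
  shows "threshold_stop b \<tau> = i"
  using bernoulli_mixture_eq_nat[OF assms(1,2) threshold_stop_strict_bounds _ assms(4)]
    assms(3) c_avg_threshold_rule[OF assms(1,2)]
  by (cases b) auto

lemma ith_params_threshold:
  assumes "i \<le> k" and "ith_params ground utility prior seed greedy_rule i = (\<tau>, \<rho>)"
  shows "0 \<le> \<rho>" and "\<rho> \<le> 1" and "c_avg prior (sub_seed seed \<rho>) (threshold_rule \<tau>) = i"
proof -
  let ?spec = "\<lambda>(\<tau>, \<rho>). 0 \<le> \<tau> \<and> 0 \<le> \<rho> \<and> \<rho> \<le> 1 \<and>
                  c_avg prior (sub_seed seed \<rho>) (threshold_rule \<tau>) = real i"
  have "?spec (\<alpha> ^ i, 0)"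
    using alpha_pos c_avg_threshold_rule[of 0 "\<alpha> ^ i"] threshold_stop_alpha_power[OF assms(1)] by simp
  then have "?spec (ith_params ground utility prior seed greedy_rule i)"
    unfolding ith_params_def by (rule someI)
  then show "0 \<le> \<rho>" and "\<rho> \<le> 1" and "c_avg prior (sub_seed seed \<rho>) (threshold_rule \<tau>) = i"
    using assms(2) by simp_all
qed

lemma Delta_u_threshold_rule:
  assumes "i \<le> k" and "0 \<le> \<rho>" and "\<rho> \<le> 1"
    and c_avg: "c_avg prior (sub_seed seed \<rho>) (threshold_rule \<tau>) = i"
  shows "Delta_u ground utility prior (sub_seed seed \<rho>) (threshold_rule \<tau>) = top_gain i"
proof -
  have top: "(if i < k then i else k) \<in> ground" using assms(1) by (simp add: ground_def)
  have bound_iff: "(\<forall>v \<in> ground. gain utility prior v (prefix i) \<le> u) \<longleftrightarrow> top_gain i \<le> u" for u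
    using gain_prefix_le_top_gain[OF assms(1)] gain_prefix_top_gain[OF assms(1)] top
    by (intro iffI ballI) (force, meson order.trans)
  have "(AE x in measure_pmf (pair_pmf (sub_seed seed \<rho>) prior).
          \<forall>v \<in> ground. gain utility prior v (final_state (threshold_rule \<tau> (fst x)) (snd x)) \<le> u)
        \<longleftrightarrow> top_gain i \<le> u" for u
    using threshold_stop_of_c_avg[OF assms(2,3) c_avg] set_pmf_not_empty[of "bernoulli_pmf \<rho>"]
    by (auto simp: AE_threshold_seed final_state_threshold_rule bound_iff)
  then show ?thesis by (simp add: Delta_u_def flip: atLeast_def)
qed

lemma Delta_l_threshold_rule:
  assumes "1 \<le> i" and "i \<le> k" and "0 \<le> \<rho>" and "\<rho> \<le> 1"
    and c_avg: "c_avg prior (sub_seed seed \<rho>) (threshold_rule \<tau>) = i"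
  shows "Delta_l utility prior (sub_seed seed \<rho>) (threshold_rule \<tau>) = \<alpha> ^ (i - 1)"
proof -
  have bound_iff: "(\<forall>t < i. u \<le> gain utility prior t (prefix t)) \<longleftrightarrow> u \<le> \<alpha> ^ (i - 1)" for u
  proof -
    have "(\<forall>t < i. u \<le> gain utility prior t (prefix t)) \<longleftrightarrow> (\<forall>t < i. u \<le> \<alpha> ^ t)"
      using assms(2) by (simp add: gain_prefix)
    also have "\<dots> \<longleftrightarrow> u \<le> \<alpha> ^ (i - 1)"
      using assms(1) alpha_power_antimono[of _ "i - 1"] by (auto intro: order.trans)
    finally show ?thesis .
  qed
  have "(AE x in measure_pmf (pair_pmf (sub_seed seed \<rho>) prior).
          \<forall>t < stop_time (threshold_rule \<tau> (fst x)) (snd x).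
            u \<le> gain utility prior (the (threshold_rule \<tau> (fst x) (state (threshold_rule \<tau> (fst x)) (snd x) t)))
                   (state (threshold_rule \<tau> (fst x)) (snd x) t))
        \<longleftrightarrow> (\<forall>t < i. u \<le> gain utility prior t (prefix t))" for u
    using threshold_stop_of_c_avg[OF assms(3,4) c_avg] set_pmf_not_empty[of "bernoulli_pmf \<rho>"]
    by (auto simp: AE_threshold_seed final_state_threshold_rule state_threshold_rule
                   threshold_rule_prefix_less less_imp_le)
  then show ?thesis by (simp add: Delta_l_def bound_iff flip: atMost_def)
qed

lemma gain_ratio_ith_threshold_policy:
  assumes "1 \<le> i" and "i \<le> k"
  shows "Delta_u_i ground utility prior seed greedy_rule i / Delta_l_i ground utility prior seed greedy_rule i
           = (if i < k then \<alpha> else \<epsilon>)"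
proof -
  obtain \<tau> \<rho> where params: "ith_params ground utility prior seed greedy_rule i = (\<tau>, \<rho>)"
    by fastforce
  note spec = ith_params_threshold[OF assms(2) params]
  have "Delta_u_i ground utility prior seed greedy_rule i = top_gain i"
    using Delta_u_threshold_rule[OF assms(2) spec] params by (simp add: Delta_u_i_def)
  moreover have "Delta_l_i ground utility prior seed greedy_rule i = \<alpha> ^ (i - 1)"
    using Delta_l_threshold_rule[OF assms spec] params by (simp add: Delta_l_i_def)
  moreover have "\<alpha> ^ i = \<alpha> * \<alpha> ^ (i - 1)"
    using assms(1) by (simp flip: power_Suc)
  moreover have "\<not> i < k \<Longrightarrow> i = k" using assms(2) by simp
  ultimately show ?thesis
    using alpha_pos by (auto simp: top_gain_def bonus_def)
qed

lemma max_gain_ratio_greedy_rule: "max_gain_ratio ground utility prior seed greedy_rule = \<epsilon>"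
proof -
  let ?ratios = "{Delta_u_i ground utility prior seed greedy_rule i / Delta_l_i ground utility prior seed greedy_rule i
                   | i. 1 \<le> i \<and> real i \<le> c_avg prior seed greedy_rule}"
  have c_avg: "c_avg prior seed greedy_rule = k"
    by (simp add: prior_def seed_def c_avg_return_pmf card_selected_greedy_rule)
  have "?ratios \<subseteq> {\<alpha>, \<epsilon>}"
    using gain_ratio_ith_threshold_policy by (auto simp: c_avg)
  moreover have "\<epsilon> \<in> ?ratios"
    using gain_ratio_ith_threshold_policy[of k] k_pos by (force simp: c_avg)
  ultimately show ?thesis
    unfolding max_gain_ratio_def using alpha_le_eps by (intro Max_eqI) (auto intro: finite_subset)
qed

end

theorem theorem7:
  fixes k :: nat and \<epsilon> :: real
  assumes "1 \<le> k" and "\<epsilon> > 0"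
  shows "\<exists>(V :: nat set) (Y :: nat set) (p :: prl pmf) (f :: nat set \<Rightarrow> prl \<Rightarrow> real)
            (q :: nat pmf) (\<pi> :: nat \<Rightarrow> prl \<Rightarrow> nat option).
           finite V \<and> finite Y \<and> is_prior V Y p \<and>
           valid_policy V \<pi> \<and> greedy V Y f p \<pi> \<and>
           (AE x in measure_pmf (pair_pmf q p). card (selected (\<pi> (fst x)) (snd x)) = k) \<and>
           max_gain_ratio V f p q \<pi> = \<epsilon>"
proof -
  interpret gain_ratio_example k \<epsilon> using assms by unfold_locales
  have "finite ground" by (simp add: ground_def)
  then show ?thesis
    using is_prior_prior valid_policy_greedy_rule greedy_rule_is_greedy
      AE_card_selected_greedy_rule max_gain_ratio_greedy_rule
    by blast
qed

end
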